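(* For propositional formulae $S_1,S_2$, the lexicographic orders $[S_1,S_2]$ and $[S_1]$ are equivalent if and only if at least one of the following holds: (1) $S_2$ is inconsistent; (2) $S_2$ is tautological; (3) $S_2$ is equivalent to $S_1$; (4) $S_2$ is equivalent to $\neg S_1$.
   Context: Models are truth assignments. For a formula $F$: $I \leq_F J$ iff $I \models F$ or $J \not\models F$. For a sequence $S=[S_1,\ldots,S_m]$: $I \leq_S J$ iff either $S=[]$, or ($I \leq_{S_1} J$ and (either $J \not\leq_{S_1} I$ or $I \leq_R J$)), where $R=[S_2,\ldots,S_m]$. Two sequences $S$ and $R$ are equivalent if $I \leq_S J$ and $I\leq_R J$ coincide for all pairs of models $I,J$. *)

theory Defs
  imports Main
begin

datatype 'a form =
    Atom 'a
  | FTrue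
  | FFalse
  | Neg "'a form"
  | Conj "'a form" "'a form"
  | Disj "'a form" "'a form"
  | Imp "'a form" "'a form"

fun models :: "('a \<Rightarrow> bool) \<Rightarrow> 'a form \<Rightarrow> bool" (infix "\<Turnstile>" 50) where
  "I \<Turnstile> Atom x = I x"
| "I \<Turnstile> FTrue = True"
| "I \<Turnstile> FFalse = False"
| "I \<Turnstile> Neg F = (\<not> I \<Turnstile> F)"
| "I \<Turnstile> Conj F G = (I \<Turnstile> F \<and> I \<Turnstile> G)"
| "I \<Turnstile> Disj F G = (I \<Turnstile> F \<or> I \<Turnstile> G)"
| "I \<Turnstile> Imp F G = (I \<Turnstile> F \<longrightarrow> I \<Turnstile> G)"

definition le_form :: "'a form \<Rightarrow> ('a \<Rightarrow> bool) \<Rightarrow> ('a \<Rightarrow> bool) \<Rightarrow> bool" where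
  "le_form F I J \<longleftrightarrow> (I \<Turnstile> F \<or> \<not> J \<Turnstile> F)"

fun le_seq :: "'a form list \<Rightarrow> ('a \<Rightarrow> bool) \<Rightarrow> ('a \<Rightarrow> bool) \<Rightarrow> bool" where
  "le_seq [] I J = True"
| "le_seq (F # R) I J =
     (le_form F I J \<and> (\<not> le_form F J I \<or> le_seq R I J))"

definition seq_equiv :: "'a form list \<Rightarrow> 'a form list \<Rightarrow> bool" where
  "seq_equiv S R \<longleftrightarrow> (\<forall>I J. le_seq S I J = le_seq R I J)"

definition inconsistent :: "'a form \<Rightarrow> bool" where
  "inconsistent F \<longleftrightarrow> (\<forall>I. \<not> I \<Turnstile> F)"

definition tautological :: "'a form \<Rightarrow> bool" where
  "tautological F \<longleftrightarrow> (\<forall>I. I \<Turnstile> F)"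

definition form_equiv :: "'a form \<Rightarrow> 'a form \<Rightarrow> bool" where
  "form_equiv F G \<longleftrightarrow> (\<forall>I. I \<Turnstile> F \<longleftrightarrow> I \<Turnstile> G)"

end

theory Submission
  imports Defs
begin

text \<open>Appending a formula to [S1] only matters for pairs of models that tie on S1, so the two
  orders coincide exactly when S2 never strictly separates such a pair, i.e. when the truth
  value of S2 is a function of that of S1. The four Boolean functions of one argument give the
  four cases.\<close>

lemma le_form_tie_iff: "le_form F I J \<and> le_form F J I \<longleftrightarrow> (I \<Turnstile> F \<longleftrightarrow> J \<Turnstile> F)"
  by (auto simp: le_form_def)

lemma le_seq_singleton: "le_seq [F] I J = le_form F I J"
  by simp

lemma seq_equiv_Cons_singleton_iff:
  "seq_equiv (F # R) [F] \<longleftrightarrow> (\<forall>I J. (I \<Turnstile> F \<longleftrightarrow> J \<Turnstile> F) \<longrightarrow> le_seq R I J)"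
  unfolding seq_equiv_def using le_form_tie_iff by fastforce

lemma truth_determined_by_iff:
  "(\<forall>I J. (I \<Turnstile> F \<longleftrightarrow> J \<Turnstile> F) \<longrightarrow> J \<Turnstile> G \<longrightarrow> I \<Turnstile> G) \<longleftrightarrow>
     inconsistent G \<or> tautological G \<or> form_equiv G F \<or> form_equiv G (Neg F)"
proof
  assume determined: "\<forall>I J. (I \<Turnstile> F \<longleftrightarrow> J \<Turnstile> F) \<longrightarrow> J \<Turnstile> G \<longrightarrow> I \<Turnstile> G"
  have "(\<forall>I. I \<Turnstile> F \<longrightarrow> I \<Turnstile> G) \<or> (\<forall>I. I \<Turnstile> F \<longrightarrow> \<not> I \<Turnstile> G)"
    using determined by blast
  moreover have "(\<forall>I. \<not> I \<Turnstile> F \<longrightarrow> I \<Turnstile> G) \<or> (\<forall>I. \<not> I \<Turnstile> F \<longrightarrow> \<not> I \<Turnstile> G)"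
    using determined by blast
  ultimately show "inconsistent G \<or> tautological G \<or> form_equiv G F \<or> form_equiv G (Neg F)"
    unfolding inconsistent_def tautological_def form_equiv_def by auto
next
  assume "inconsistent G \<or> tautological G \<or> form_equiv G F \<or> form_equiv G (Neg F)"
  then show "\<forall>I J. (I \<Turnstile> F \<longleftrightarrow> J \<Turnstile> F) \<longrightarrow> J \<Turnstile> G \<longrightarrow> I \<Turnstile> G"
    unfolding inconsistent_def tautological_def form_equiv_def by auto
qed

theorem theorem4:
  fixes S1 S2 :: "'a form"
  shows "seq_equiv [S1, S2] [S1] \<longleftrightarrow>
           (inconsistent S2 \<or> tautological S2 \<or> form_equiv S2 S1 \<or> form_equiv S2 (Neg S1))"
proof -
  have "seq_equiv [S1, S2] [S1] \<longleftrightarrow>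
      (\<forall>I J. (I \<Turnstile> S1 \<longleftrightarrow> J \<Turnstile> S1) \<longrightarrow> J \<Turnstile> S2 \<longrightarrow> I \<Turnstile> S2)"
    unfolding seq_equiv_Cons_singleton_iff le_seq_singleton le_form_def by blast
  then show ?thesis
    using truth_determined_by_iff by blast
qed

end
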